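(* Let $n>k\geq1$, $r=n-k$, and let $2\leq h\leq n-k$ and $k<d\leq n-h$ be integers. Let $\delta=\gcd(h,d-k)$, $s_0=\frac{d-k+\delta}{\delta}$, $s=\frac{d-k+h}{\delta}$ and $\ell=s\cdot s_0^n$. Let $F$ be a finite field with $|F|\geq s_0 n$ and let $\lambda_{i,j}$, $i\in[n]$, $j\in[0,s_0-1]$, be $s_0 n$ distinct elements of $F$. Let $\mathcal{C}_3$ be the set of all $(\bm c_1,\ldots,\bm c_n)$ with $\bm c_i=(c_{i,0},\ldots,c_{i,\ell-1})\in F^\ell$ satisfying $$\sum_{i=1}^n \lambda_{i,a_i}^{t-1} c_{i,(a,b)}=0\quad\text{for all } a\in[0,s_0^n-1],\ b\in[0,s-1],\ t\in[r].$$ Then $\mathcal{C}_3$ is an $(n,k,\ell)$ MDS array code satisfying the $(h,d)$-optimal repair property.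
   Context: Notation: $[n]=\{1,\ldots,n\}$, $[i,j]=\{i,\ldots,j\}$. Each $\tau\in[0,\ell-1]$ is written uniquely as $\tau=b\cdot s_0^n+\sum_{i=1}^n a_i s_0^{i-1}$ with $b\in[0,s-1]$, $a_i\in[0,s_0-1]$; we write $a=(a_1,\ldots,a_n)=\sum_i a_i s_0^{i-1}$ and $\tau=(a,b)$, so $c_{i,(a,b)}=c_{i,\tau}$. An $(n,k,\ell)$ MDS array code over $F$ is an $F$-linear set of vectors $(\bm c_1,\ldots,\bm c_n)$, $\bm c_i\in F^\ell$ (node $i$ stores $\bm c_i$), of dimension $k\ell$, such that any $k$ coordinates $\bm c_i$ determine the codeword. The $(h,d)$-optimal repair property means: for every $h$-subset $\mathcal{H}\subseteq[n]$ and every $d$-subset $\mathcal{R}\subseteq[n]\setminus\mathcal{H}$, each helper $j\in\mathcal{R}$ can send $\beta=\frac{h\ell}{d-k+h}$ symbols of $F$ computed from $\bm c_j$ such that from these $\frac{dh\ell}{d-k+h}$ symbols in total all $\bm c_i$, $i\in\mathcal{H}$, are determined, for every codeword (equality in the cut-set bound). *)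

theory Defs
  imports Complex_Main "HOL-Library.Function_Algebras"
begin

(* A codeword (c_1,...,c_n), c_i in F^ell, is represented as c :: nat => nat => 'a,
   where c i tau = c_{i,tau} for i in {1..n}, tau in {0..<ell}, and c is zero elsewhere. *)

definition cw_scale :: "'a::field \<Rightarrow> (nat \<Rightarrow> nat \<Rightarrow> 'a) \<Rightarrow> (nat \<Rightarrow> nat \<Rightarrow> 'a)" where
  "cw_scale x c = (\<lambda>i \<tau>. x * c i \<tau>)"

definition array_space :: "nat \<Rightarrow> nat \<Rightarrow> (nat \<Rightarrow> nat \<Rightarrow> 'a::zero) set" where
  "array_space n ell = {c. \<forall>i \<tau>. (i \<notin> {1..n} \<or> ell \<le> \<tau>) \<longrightarrow> c i \<tau> = 0}"

definition is_MDS_array_code :: "nat \<Rightarrow> nat \<Rightarrow> nat \<Rightarrow> (nat \<Rightarrow> nat \<Rightarrow> 'a::field) set \<Rightarrow> bool" where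
  "is_MDS_array_code n k ell C \<longleftrightarrow>
     C \<subseteq> array_space n ell \<and>
     module.subspace cw_scale C \<and>
     vector_space.dim cw_scale C = k * ell \<and>
     (\<forall>K. K \<subseteq> {1..n} \<and> card K = k \<longrightarrow>
        (\<forall>c\<in>C. \<forall>c'\<in>C. (\<forall>i\<in>K. c i = c' i) \<longrightarrow> c = c'))"

(* (h,d)-optimal repair: for every h-subset H of [n] and d-subset R of [n]-H, each helper
   j in R sends beta = h*ell/(d-k+h) symbols g j (c j) 0, ..., g j (c j) (beta-1),
   computed from c_j alone, and these determine all c_i, i in H. *)
definition has_optimal_repair :: "nat \<Rightarrow> nat \<Rightarrow> nat \<Rightarrow> nat \<Rightarrow> nat \<Rightarrow> (nat \<Rightarrow> nat \<Rightarrow> 'a) set \<Rightarrow> bool" where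
  "has_optimal_repair n k ell h d C \<longleftrightarrow>
     (\<forall>H R. H \<subseteq> {1..n} \<and> card H = h \<and> R \<subseteq> {1..n} - H \<and> card R = d \<longrightarrow>
        (\<exists>g :: nat \<Rightarrow> (nat \<Rightarrow> 'a) \<Rightarrow> nat \<Rightarrow> 'a.
           \<forall>c\<in>C. \<forall>c'\<in>C.
             (\<forall>j\<in>R. \<forall>m < h * ell div (d - k + h). g j (c j) m = g j (c' j) m)
             \<longrightarrow> (\<forall>i\<in>H. c i = c' i)))"

(* digit a_i of a = sum_i a_i s0^(i-1), i in [1..n] *)
definition digit :: "nat \<Rightarrow> nat \<Rightarrow> nat \<Rightarrow> nat" where
  "digit s0 a i = (a div s0 ^ (i - 1)) mod s0"

definition code_C3 :: "nat \<Rightarrow> nat \<Rightarrow> nat \<Rightarrow> nat \<Rightarrow> (nat \<Rightarrow> nat \<Rightarrow> 'a::field) \<Rightarrow> (nat \<Rightarrow> nat \<Rightarrow> 'a) set" where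
  "code_C3 n r s0 s lam = {c \<in> array_space n (s * s0 ^ n).
     \<forall>a < s0 ^ n. \<forall>b < s. \<forall>t \<in> {1..r}.
       (\<Sum>i = 1..n. lam i (digit s0 a i) ^ (t - 1) * c i (b * s0 ^ n + a)) = 0}"

end

theory Submission
  imports Defs "HOL-Computational_Algebra.Polynomial" "HOL-Library.FuncSet"
begin

text \<open>
  Both properties come from Vandermonde systems in the distinct nodes \<open>\<lambda>\<^sub>i\<^sub>,\<^sub>j\<close>.
  At a position \<open>(a, b)\<close> the \<open>r\<close> parity checks form such a system in the \<open>n\<close> symbols
  of that position, with nodes \<open>\<lambda>\<^sub>i\<^sub>,\<^sub>a\<^sub>i\<close>: any \<open>r\<close> of them are determined by the other \<open>k\<close>,
  and solving for them gives a systematic encoder, hence dimension \<open>k\<ell>\<close>.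

  For repair write \<open>h = \<delta>h'\<close> and \<open>d - k = \<delta>m\<close>, so that \<open>s\<^sub>0 = m + 1\<close> and \<open>s = m + h'\<close>, and
  cut the erased nodes into \<open>h'\<close> blocks of \<open>\<delta>\<close> nodes, layer \<open>m + q\<close> belonging to block \<open>q\<close>.
  Shifting the digits of a position cyclically at the nodes of a block gives \<open>s\<^sub>0\<close> positions;
  summed over them, the parity checks see every node outside the block only through one
  linear combination of its symbols, which is what a helper sends. Once the \<open>d\<close> helpers'
  combinations are known, the unknowns are \<open>\<delta>s\<^sub>0\<close> terms of the block nodes and the
  combinations of the at most \<open>n - d - \<delta>\<close> other nodes, \<open>\<delta>m + n - d = n - k\<close> in all, so the
  Vandermonde argument recovers them. Each helper sends \<open>h's\<^sub>0\<^sup>n = h\<ell>/(d - k + h)\<close> symbols.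
\<close>

section \<open>Base-\<open>s\<^sub>0\<close> digits\<close>

definition from_digits :: "nat \<Rightarrow> (nat \<Rightarrow> nat) \<Rightarrow> nat \<Rightarrow> nat" where
  "from_digits s0 D n = (\<Sum>i = 1..n. D i * s0 ^ (i - 1))"

lemma from_digits_Suc: "from_digits s0 D (Suc n) = from_digits s0 D n + D (Suc n) * s0 ^ n"
  unfolding from_digits_def by simp

lemma from_digits_cong:
  "(\<And>i. i \<in> {1..n} \<Longrightarrow> D i = D' i) \<Longrightarrow> from_digits s0 D n = from_digits s0 D' n"
  unfolding from_digits_def by (rule sum.cong) auto

lemma from_digits_less:
  assumes "\<And>i. i \<in> {1..n} \<Longrightarrow> D i < s0"
  shows "from_digits s0 D n < s0 ^ n"
  using assms
proof (induction n)
  case 0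
  then show ?case by (simp add: from_digits_def)
next
  case (Suc n)
  have "from_digits s0 D n + D (Suc n) * s0 ^ n < s0 ^ n + D (Suc n) * s0 ^ n"
    using Suc by simp
  also have "\<dots> = (D (Suc n) + 1) * s0 ^ n" by simp
  also have "\<dots> \<le> s0 * s0 ^ n"
    using Suc.prems[of "Suc n"] by (intro mult_right_mono) auto
  finally show ?case by (simp add: from_digits_Suc)
qed

lemma digit_less: "0 < s0 \<Longrightarrow> digit s0 a i < s0"
  unfolding digit_def by simp

lemma digit_add_mult_power:
  assumes "0 < s0" "i \<in> {1..n}"
  shows "digit s0 (x + y * s0 ^ n) i = digit s0 x i"
proof -
  have "n = (i - 1) + Suc (n - i)" using assms(2) by auto
  then have "x + y * s0 ^ n = x + s0 * (y * s0 ^ (n - i)) * s0 ^ (i - 1)"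
    by (metis power_add power_Suc mult_ac)
  then have "(x + y * s0 ^ n) div s0 ^ (i - 1) = s0 * (y * s0 ^ (n - i)) + x div s0 ^ (i - 1)"
    using assms(1) by (metis div_mult_self1 gr_implies_not0 power_not_zero)
  then show ?thesis unfolding digit_def by simp
qed

lemma digit_from_digits:
  assumes "0 < s0" "\<And>i. i \<in> {1..n} \<Longrightarrow> D i < s0" "i \<in> {1..n}"
  shows "digit s0 (from_digits s0 D n) i = D i"
  using assms(2,3)
proof (induction n)
  case 0
  then show ?case by simp
next
  case (Suc n)
  have low: "from_digits s0 D n < s0 ^ n"
    using Suc.prems by (intro from_digits_less) auto
  show ?case
  proof (cases "i = Suc n")
    case True
    then show ?thesis
      using low Suc.prems assms(1) by (simp add: from_digits_Suc digit_def)
  next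
    case False
    then show ?thesis
      using Suc assms(1) by (simp add: from_digits_Suc digit_add_mult_power)
  qed
qed

lemma from_digits_digit: "from_digits s0 (digit s0 a) n = a mod s0 ^ n"
proof (induction n)
  case 0
  then show ?case by (simp add: from_digits_def)
next
  case (Suc n)
  have "from_digits s0 (digit s0 a) (Suc n) = a mod s0 ^ n + a div s0 ^ n mod s0 * s0 ^ n"
    by (simp add: from_digits_Suc Suc digit_def)
  also have "\<dots> = a mod (s0 ^ n * s0)" by (simp add: mod_mult2_eq)
  finally show ?case by (simp add: mult.commute)
qed

lemma digits_eq_imp_eq:
  assumes "a < s0 ^ n" "a' < s0 ^ n" "\<And>i. i \<in> {1..n} \<Longrightarrow> digit s0 a i = digit s0 a' i"
  shows "a = a'"
proof -
  have "a = from_digits s0 (digit s0 a) n" using assms(1) by (simp add: from_digits_digit)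
  also have "\<dots> = from_digits s0 (digit s0 a') n" using assms(3) by (rule from_digits_cong)
  also have "\<dots> = a'" using assms(2) by (simp add: from_digits_digit)
  finally show ?thesis .
qed

section \<open>Vandermonde systems\<close>

lemma vandermonde_homogeneous_zero:
  fixes \<mu> :: "'b \<Rightarrow> 'a::field"
  assumes fin: "finite S" and inj: "inj_on \<mu> S" and card: "card S \<le> r"
    and eqs: "\<And>t. t \<in> {1..r} \<Longrightarrow> (\<Sum>p\<in>S. \<mu> p ^ (t - 1) * y p) = 0"
    and p0: "p0 \<in> S"
  shows "y p0 = 0"
proof -
  define P where "P = (\<Prod>p\<in>S - {p0}. [:- \<mu> p, 1:])"
  have "degree P \<le> card (S - {p0})"
    unfolding P_def using degree_prod_sum_le[of "S - {p0}" "\<lambda>p. [:- \<mu> p, 1:]"] fin by simp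
  then have deg: "degree P < r"
    using card card_Diff1_less[OF fin p0] by linarith
  have poly_P: "poly P x = (\<Prod>p\<in>S - {p0}. x - \<mu> p)" for x
    unfolding P_def poly_prod by simp
  have "0 = (\<Sum>j\<le>degree P. coeff P j * (\<Sum>p\<in>S. \<mu> p ^ j * y p))"
    using eqs[of "Suc _"] deg by (intro sum.neutral[symmetric]) auto
  also have "\<dots> = (\<Sum>p\<in>S. y p * poly P (\<mu> p))"
    by (simp add: poly_altdef sum_distrib_left sum_distrib_right mult_ac
        sum.swap[of _ "{..degree P}"])
  also have "\<dots> = y p0 * poly P (\<mu> p0)"
    using fin p0 by (subst sum.remove[of _ p0]) (auto simp: poly_P intro!: sum.neutral prod_zero)
  finally show ?thesis
    using fin inj p0 by (auto simp: poly_P inj_on_def)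
qed

(* Over a finite field the injective linear map y \<mapsto> (\<Sum>p. \<mu> p ^ (t - 1) * y p)\<^sub>t between
   two sets of cardinality |F| ^ r is onto. *)
lemma vandermonde_solvable:
  fixes \<mu> :: "'b \<Rightarrow> 'a::{field,finite}"
  assumes fin: "finite P" and inj: "inj_on \<mu> P" and card: "card P = r"
  shows "\<exists>y. \<forall>t\<in>{1..r}. (\<Sum>p\<in>P. \<mu> p ^ (t - 1) * y p) = rhs t"
proof -
  define V where "V y = (\<lambda>t\<in>{1..r}. \<Sum>p\<in>P. \<mu> p ^ (t - 1) * y p)" for y
  have "inj_on V (P \<rightarrow>\<^sub>E UNIV)"
  proof (rule inj_onI)
    fix y y' assume y: "y \<in> P \<rightarrow>\<^sub>E UNIV" and y': "y' \<in> P \<rightarrow>\<^sub>E UNIV" and eq: "V y = V y'"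
    have "y p - y' p = 0" if "p \<in> P" for p
    proof (rule vandermonde_homogeneous_zero[OF fin inj _ _ that])
      fix t assume t: "t \<in> {1..r}"
      then have "V y t = V y' t" using eq by simp
      with t show "(\<Sum>p\<in>P. \<mu> p ^ (t - 1) * (y p - y' p)) = 0"
        by (simp add: V_def right_diff_distrib sum_subtractf)
    qed (use card in simp)
    then show "y = y'" using y y' by (intro PiE_ext) auto
  qed
  moreover have "V ` (P \<rightarrow>\<^sub>E UNIV) \<subseteq> {1..r} \<rightarrow>\<^sub>E UNIV" by (auto simp: V_def)
  moreover have "card (P \<rightarrow>\<^sub>E (UNIV :: 'a set)) = card ({1..r} \<rightarrow>\<^sub>E (UNIV :: 'a set))"
    using fin card by (simp add: card_PiE)
  ultimately have "V ` (P \<rightarrow>\<^sub>E UNIV) = {1..r} \<rightarrow>\<^sub>E UNIV"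
    by (intro card_subset_eq) (auto simp: card_image finite_PiE)
  then have "restrict rhs {1..r} \<in> V ` (P \<rightarrow>\<^sub>E UNIV)" by simp
  then obtain y where y: "restrict rhs {1..r} = V y" by blast
  have "(\<Sum>p\<in>P. \<mu> p ^ (t - 1) * y p) = rhs t" if "t \<in> {1..r}" for t
    using fun_cong[OF y, of t] that by (simp add: V_def)
  then show ?thesis by blast
qed

section \<open>The code is MDS\<close>

lemma sum_fun_apply: "sum f A x = (\<Sum>a\<in>A. f a x)"
  by (induction A rule: infinite_finite_induct) auto

lemma index_less_mult: "(b::nat) < s \<Longrightarrow> a < N \<Longrightarrow> b * N + a < s * N"
proof -
  assume "b < s" "a < N"
  then have "b * N + a < (b + 1) * N" by simp
  also have "\<dots> \<le> s * N" using \<open>b < s\<close> by (intro mult_right_mono) auto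
  finally show ?thesis .
qed

lemma array_space_zero: "c \<in> array_space n ell \<Longrightarrow> i \<notin> {1..n} \<or> ell \<le> \<tau> \<Longrightarrow> c i \<tau> = 0"
  unfolding array_space_def by auto

interpretation cw: vector_space "cw_scale :: 'a::field \<Rightarrow> (nat \<Rightarrow> nat \<Rightarrow> 'a) \<Rightarrow> _"
  by unfold_locales (auto simp: cw_scale_def fun_eq_iff algebra_simps)

locale C3_code =
  fixes n k s0 s :: nat and lam :: "nat \<Rightarrow> nat \<Rightarrow> 'a::{field,finite}"
  assumes k_less_n: "k < n" and s0_pos: "0 < s0"
    and lam_inj: "inj_on (\<lambda>(i, j). lam i j) ({1..n} \<times> {0..<s0})"
begin

(* The position (a, b) is \<tau> = b * N + a; "layer b" means the positions b * N + a, a < N. *)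
definition N :: nat where "N = s0 ^ n"
definition ell :: nat where "ell = s * N"
definition C :: "(nat \<Rightarrow> nat \<Rightarrow> 'a) set" where "C = code_C3 n (n - k) s0 s lam"

lemma N_pos: "0 < N"
  using s0_pos by (simp add: N_def)

lemma position_less: "b < s \<Longrightarrow> a < N \<Longrightarrow> b * N + a < ell"
  unfolding ell_def by (rule index_less_mult)

lemma position_decomp: "\<tau> < ell \<Longrightarrow> \<tau> div N < s \<and> \<tau> mod N < N \<and> \<tau> = \<tau> div N * N + \<tau> mod N"
  using N_pos by (auto simp: ell_def less_mult_imp_div_less div_mult_mod_eq)

lemma mem_C_iff: "c \<in> C \<longleftrightarrow> c \<in> array_space n ell \<and> (\<forall>a < N. \<forall>b < s. \<forall>t \<in> {1..n - k}.
    (\<Sum>i = 1..n. lam i (digit s0 a i) ^ (t - 1) * c i (b * N + a)) = 0)"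
  unfolding C_def code_C3_def ell_def N_def by simp

lemma C_array_space: "c \<in> C \<Longrightarrow> c \<in> array_space n ell"
  by (simp add: mem_C_iff)

lemma parity_check:
  "c \<in> C \<Longrightarrow> a < N \<Longrightarrow> b < s \<Longrightarrow> t \<in> {1..n - k} \<Longrightarrow>
    (\<Sum>i = 1..n. lam i (digit s0 a i) ^ (t - 1) * c i (b * N + a)) = 0"
  unfolding mem_C_iff by blast

lemma parity_check_at:
  assumes "c \<in> C" "\<tau> < ell" "t \<in> {1..n - k}"
  shows "(\<Sum>i = 1..n. lam i (digit s0 (\<tau> mod N) i) ^ (t - 1) * c i \<tau>) = 0"
proof -
  have "\<tau> div N < s" "\<tau> mod N < N" using position_decomp[OF assms(2)] by auto
  from parity_check[OF assms(1) this(2,1) assms(3)] show ?thesis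
    by (simp only: div_mult_mod_eq)
qed

lemma inj_on_evaluation_points: "P \<subseteq> {1..n} \<Longrightarrow> inj_on (\<lambda>i. lam i (digit s0 a i)) P"
proof (rule inj_onI)
  fix i j assume "P \<subseteq> {1..n}" "i \<in> P" "j \<in> P" "lam i (digit s0 a i) = lam j (digit s0 a j)"
  then have "(i, digit s0 a i) = (j, digit s0 a j)"
    using digit_less[OF s0_pos] by (intro inj_onD[OF lam_inj]) auto
  then show "i = j" by simp
qed

lemma C_subspace: "cw.subspace C"
  unfolding cw.subspace_def
proof (intro conjI ballI allI)
  show "0 \<in> C" unfolding mem_C_iff array_space_def by simp
next
  fix x y assume "x \<in> C" "y \<in> C"
  then show "x + y \<in> C"
    unfolding mem_C_iff array_space_def by (simp add: distrib_left sum.distrib)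
next
  fix u x assume "x \<in> C"
  then show "cw_scale u x \<in> C"
    unfolding mem_C_iff array_space_def cw_scale_def
    by (simp add: mult.left_commute[of _ u] flip: sum_distrib_left)
qed

lemma C_eq_if_agree_on:
  assumes K: "K \<subseteq> {1..n}" "card K = k" and c: "c \<in> C" "c' \<in> C"
    and agree: "\<forall>i\<in>K. c i = c' i"
  shows "c = c'"
proof (intro ext)
  fix i \<tau>
  show "c i \<tau> = c' i \<tau>"
  proof (cases "i \<in> {1..n} - K \<and> \<tau> < ell")
    case False
    then consider "i \<in> K" | "i \<notin> {1..n} \<or> ell \<le> \<tau>" by fastforce
    then show ?thesis
    proof cases
      case 2
      then show ?thesis using array_space_zero C_array_space c by metis
    qed (use agree in simp)
  next
    case True
    define \<mu> where "\<mu> j = lam j (digit s0 (\<tau> mod N) j)" for j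
    have "c i \<tau> - c' i \<tau> = 0"
    proof (rule vandermonde_homogeneous_zero[of "{1..n} - K" \<mu> "n - k" "\<lambda>j. c j \<tau> - c' j \<tau>" i])
      show "inj_on \<mu> ({1..n} - K)" unfolding \<mu>_def by (rule inj_on_evaluation_points) auto
      show "card ({1..n} - K) \<le> n - k" using K by (simp add: card_Diff_subset finite_subset)
      fix t assume t: "t \<in> {1..n - k}"
      have "(\<Sum>j\<in>{1..n} - K. \<mu> j ^ (t - 1) * (c j \<tau> - c' j \<tau>))
          = (\<Sum>j = 1..n. \<mu> j ^ (t - 1) * (c j \<tau> - c' j \<tau>))"
        using agree by (intro sum.mono_neutral_left) auto
      also have "\<dots> = 0"
        using parity_check_at[OF c(1) _ t] parity_check_at[OF c(2) _ t] True
        by (simp add: \<mu>_def right_diff_distrib sum_subtractf)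
      finally show "(\<Sum>j\<in>{1..n} - K. \<mu> j ^ (t - 1) * (c j \<tau> - c' j \<tau>)) = 0" .
    qed (use True in auto)
    then show ?thesis by simp
  qed
qed

lemma C_systematic: "\<exists>c\<in>C. \<forall>i\<in>{1..k}. \<forall>\<tau><ell. c i \<tau> = v i \<tau>"
proof -
  define \<mu> where "\<mu> \<tau> i = lam i (digit s0 (\<tau> mod N) i)" for \<tau> i
  have "\<forall>\<tau>. \<exists>y. \<forall>t\<in>{1..n - k}.
      (\<Sum>i\<in>{k<..n}. \<mu> \<tau> i ^ (t - 1) * y i) = - (\<Sum>i = 1..k. \<mu> \<tau> i ^ (t - 1) * v i \<tau>)"
    unfolding \<mu>_def by (intro allI vandermonde_solvable) (auto intro: inj_on_evaluation_points)
  from choice[OF this] obtain Y where Y: "\<forall>\<tau>. \<forall>t\<in>{1..n - k}.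
      (\<Sum>i\<in>{k<..n}. \<mu> \<tau> i ^ (t - 1) * Y \<tau> i) = - (\<Sum>i = 1..k. \<mu> \<tau> i ^ (t - 1) * v i \<tau>)" ..
  define c where "c i \<tau> = (if i \<in> {1..n} \<and> \<tau> < ell then if i \<le> k then v i \<tau> else Y \<tau> i else 0)"
    for i \<tau>
  have nodes_split: "{1..n} = {1..k} \<union> {k<..n}" using k_less_n by auto
  have "c \<in> C"
    unfolding mem_C_iff
  proof (intro conjI allI impI ballI)
    show "c \<in> array_space n ell" by (simp add: array_space_def c_def)
    fix a b t assume a: "a < N" and b: "b < s" and t: "t \<in> {1..n - k}"
    have pos: "b * N + a < ell" "(b * N + a) mod N = a" using position_less[OF b a] a by auto
    have "(\<Sum>i = 1..n. \<mu> (b * N + a) i ^ (t - 1) * c i (b * N + a))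
        = (\<Sum>i = 1..k. \<mu> (b * N + a) i ^ (t - 1) * v i (b * N + a))
          + (\<Sum>i\<in>{k<..n}. \<mu> (b * N + a) i ^ (t - 1) * Y (b * N + a) i)"
      unfolding nodes_split using pos(1) k_less_n
      by (subst sum.union_disjoint) (auto simp: c_def intro!: arg_cong2[where f = "(+)"] sum.cong)
    also have "\<dots> = 0" using Y t by simp
    finally show "(\<Sum>i = 1..n. lam i (digit s0 a i) ^ (t - 1) * c i (b * N + a)) = 0"
      using pos(2) by (simp add: \<mu>_def)
  qed
  moreover have "\<forall>i\<in>{1..k}. \<forall>\<tau><ell. c i \<tau> = v i \<tau>" using k_less_n by (simp add: c_def)
  ultimately show ?thesis by blast
qed

definition info_positions :: "(nat \<times> nat) set" where
  "info_positions = {1..k} \<times> {0..<ell}"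

definition unit_codeword :: "nat \<times> nat \<Rightarrow> nat \<Rightarrow> nat \<Rightarrow> 'a" where
  "unit_codeword p = (SOME c. c \<in> C \<and> (\<forall>i\<in>{1..k}. \<forall>\<tau><ell. c i \<tau> = (if (i, \<tau>) = p then 1 else 0)))"

lemma unit_codeword:
  "unit_codeword p \<in> C \<and> (\<forall>i\<in>{1..k}. \<forall>\<tau><ell. unit_codeword p i \<tau> = (if (i, \<tau>) = p then 1 else 0))"
proof -
  have "\<exists>c. c \<in> C \<and> (\<forall>i\<in>{1..k}. \<forall>\<tau><ell. c i \<tau> = (if (i, \<tau>) = p then 1 else 0))"
    using C_systematic[of "\<lambda>i \<tau>. if (i, \<tau>) = p then 1 else 0"] by blast
  then show ?thesis unfolding unit_codeword_def by (rule someI_ex)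
qed

lemma sum_unit_codewords_apply:
  assumes "(i, \<tau>) \<in> info_positions"
  shows "(\<Sum>p\<in>info_positions. f p * unit_codeword p i \<tau>) = f (i, \<tau>)"
proof -
  have "(\<Sum>p\<in>info_positions. f p * unit_codeword p i \<tau>)
      = (\<Sum>p\<in>info_positions. if (i, \<tau>) = p then f p else 0)"
    using unit_codeword assms by (intro sum.cong) (auto simp: info_positions_def)
  also have "\<dots> = f (i, \<tau>)" using assms by (simp add: info_positions_def)
  finally show ?thesis .
qed

lemma inj_on_unit_codeword: "inj_on unit_codeword info_positions"
proof (rule inj_onI)
  fix p p' assume "p \<in> info_positions" and eq: "unit_codeword p = unit_codeword p'"
  then obtain i \<tau> where p: "p = (i, \<tau>)" "i \<in> {1..k}" "\<tau> < ell" by (auto simp: info_positions_def)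
  have "unit_codeword p i \<tau> = 1" using unit_codeword[of p] p by simp
  moreover have "unit_codeword p' i \<tau> = (if p = p' then 1 else 0)"
    using unit_codeword[of p'] p by auto
  ultimately show "p = p'" using eq by (metis zero_neq_one)
qed

lemma C_span_unit_codewords: "C \<subseteq> cw.span (unit_codeword ` info_positions)"
proof
  fix c assume c: "c \<in> C"
  define z where "z = (\<Sum>p\<in>info_positions. cw_scale (c (fst p) (snd p)) (unit_codeword p))"
  have z: "z \<in> C"
    unfolding z_def using unit_codeword
    by (intro cw.subspace_sum[OF C_subspace] cw.subspace_scale[OF C_subspace]) auto
  have "c = z"
  proof (rule C_eq_if_agree_on[of "{1..k}"])
    show "\<forall>i\<in>{1..k}. c i = z i"
    proof (intro ballI ext)
      fix i \<tau> assume i: "i \<in> {1..k}"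
      show "c i \<tau> = z i \<tau>"
      proof (cases "\<tau> < ell")
        case True
        then have "(i, \<tau>) \<in> info_positions" using i by (simp add: info_positions_def)
        then show ?thesis
          by (simp add: z_def sum_fun_apply cw_scale_def
              sum_unit_codewords_apply[where f = "\<lambda>p. c (fst p) (snd p)"])
      next
        case False
        then show ?thesis using array_space_zero C_array_space c z by (metis not_le)
      qed
    qed
  qed (use c z k_less_n in auto)
  moreover have "z \<in> cw.span (unit_codeword ` info_positions)"
    unfolding z_def by (intro cw.span_sum cw.span_scale cw.span_base) auto
  ultimately show "c \<in> cw.span (unit_codeword ` info_positions)" by simp
qed

lemma independent_unit_codewords: "cw.independent (unit_codeword ` info_positions)"
proof
  have "finite (unit_codeword ` info_positions)" by (simp add: info_positions_def)
  moreover assume "cw.dependent (unit_codeword ` info_positions)"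
  ultimately obtain u where u: "\<exists>v\<in>unit_codeword ` info_positions. u v \<noteq> 0"
    "(\<Sum>v\<in>unit_codeword ` info_positions. cw_scale (u v) v) = 0"
    using cw.dependent_finite by blast
  from u(1) obtain p where p: "p \<in> info_positions" "u (unit_codeword p) \<noteq> 0" by blast
  have "(\<Sum>q\<in>info_positions. cw_scale (u (unit_codeword q)) (unit_codeword q)) = 0"
    using u(2) by (simp add: sum.reindex[OF inj_on_unit_codeword])
  then have "(\<Sum>q\<in>info_positions. u (unit_codeword q) * unit_codeword q (fst p) (snd p)) = 0"
    by (simp add: fun_eq_iff sum_fun_apply cw_scale_def)
  then show False using p sum_unit_codewords_apply[of "fst p" "snd p"] by simp
qed

lemma C_dim: "cw.dim C = k * ell"
proof (rule cw.dim_unique[OF _ C_span_unit_codewords independent_unit_codewords])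
  show "unit_codeword ` info_positions \<subseteq> C" using unit_codeword by auto
  show "card (unit_codeword ` info_positions) = k * ell"
    unfolding card_image[OF inj_on_unit_codeword]
    by (simp add: info_positions_def card_cartesian_product)
qed

lemma C_MDS: "is_MDS_array_code n k ell C"
  unfolding is_MDS_array_code_def using C_array_space C_subspace C_dim C_eq_if_agree_on by blast

end

section \<open>Optimal repair\<close>

lemma mod_add_left_cancel_less:
  fixes s0 :: nat
  assumes "z < s0" "z' < s0" "(x + z) mod s0 = (x + z') mod s0"
  shows "z = z'"
proof -
  from assms(3) obtain q q' where "x + z + s0 * q = x + z' + s0 * q'"
    by (auto simp: nat_mod_eq_iff)
  then have "(z + s0 * q) mod s0 = (z' + s0 * q') mod s0" by simp
  then show ?thesis using assms(1,2) by simp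
qed

(* Any common divisor \<delta> of h and d - k works; the theorem takes the gcd. *)
locale C3_params = C3_code n k s0 s lam
  for n k s0 s :: nat and lam :: "nat \<Rightarrow> nat \<Rightarrow> 'a::{field,finite}" +
  fixes h d \<delta> m h' :: nat
  assumes \<delta>_pos: "0 < \<delta>" and h_eq: "h = \<delta> * h'" and d_minus_k: "d - k = \<delta> * m"
    and k_less_d: "k < d" and d_plus_h: "d + h \<le> n"
    and s0_eq: "s0 = m + 1" and s_eq: "s = m + h'"

locale C3_repair = C3_params +
  fixes H R :: "nat set" and idx :: "nat \<Rightarrow> nat"
  assumes H_subset: "H \<subseteq> {1..n}" and card_H: "card H = h"
    and R_subset: "R \<subseteq> {1..n} - H" and card_R: "card R = d"
    and idx: "bij_betw idx H {0..<h}"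
begin

definition blk :: "nat \<Rightarrow> nat" where
  "blk i = idx i div \<delta>"

definition B :: "nat \<Rightarrow> nat set" where
  "B q = {i \<in> H. blk i = q}"

definition rep :: "nat \<Rightarrow> nat" where
  "rep q = inv_into H idx (q * \<delta>)"

definition shift :: "nat \<Rightarrow> nat \<Rightarrow> nat \<Rightarrow> nat" where
  "shift q a z = from_digits s0 (\<lambda>i. if i \<in> B q then (digit s0 a i + z) mod s0 else digit s0 a i) n"

lemma B_subset: "B q \<subseteq> H"
  unfolding B_def by auto

lemma B_subset_nodes: "B q \<subseteq> {1..n}"
  using B_subset H_subset by blast

lemma finite_B: "finite (B q)"
  using B_subset_nodes by (rule finite_subset) simp

lemma mem_B_blk: "i \<in> H \<Longrightarrow> i \<in> B (blk i)"
  unfolding B_def by simp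

lemma blk_less: "i \<in> H \<Longrightarrow> blk i < h'"
proof -
  assume "i \<in> H"
  then have "idx i < \<delta> * h'" using idx h_eq by (auto simp: bij_betw_def)
  then show ?thesis unfolding blk_def using \<delta>_pos by (simp add: div_less_iff_less_mult mult.commute)
qed

lemma rep_mem_B: "q < h' \<Longrightarrow> rep q \<in> B q"
proof -
  assume "q < h'"
  then have "q * \<delta> \<in> idx ` H" using idx h_eq \<delta>_pos by (auto simp: bij_betw_def mult.commute)
  then show ?thesis
    using \<delta>_pos unfolding rep_def B_def blk_def by (simp add: inv_into_into f_inv_into_f)
qed

lemma card_B_le: "card (B q) \<le> \<delta>"
proof -
  have "inj_on idx (B q)" using idx B_subset by (auto simp: bij_betw_def intro: inj_on_subset)
  moreover have "idx ` B q \<subseteq> {q * \<delta>..<q * \<delta> + \<delta>}"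
  proof
    fix x assume "x \<in> idx ` B q"
    then have "x div \<delta> = q" unfolding B_def blk_def by auto
    then show "x \<in> {q * \<delta>..<q * \<delta> + \<delta>}"
      using div_mult_mod_eq[of x \<delta>] mod_less_divisor[OF \<delta>_pos, of x] by auto
  qed
  ultimately have "card (B q) \<le> card {q * \<delta>..<q * \<delta> + \<delta>}" by (intro card_inj_on_le) auto
  then show ?thesis by simp
qed

lemma shift_less: "shift q a z < N"
  unfolding shift_def N_def using s0_pos by (intro from_digits_less) (auto simp: digit_less)

lemma digit_shift: "i \<in> {1..n} \<Longrightarrow>
    digit s0 (shift q a z) i = (if i \<in> B q then (digit s0 a i + z) mod s0 else digit s0 a i)"
  unfolding shift_def using s0_pos by (subst digit_from_digits) (auto simp: digit_less)

lemma shift_0: "a < N \<Longrightarrow> shift q a 0 = a"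
  unfolding N_def using s0_pos
  by (intro digits_eq_imp_eq[OF shift_less[unfolded N_def]]) (auto simp: digit_shift digit_less)

lemma shift_shift:
  assumes "a < N" "(z + z') mod s0 = 0"
  shows "shift q (shift q a z) z' = a"
proof (rule digits_eq_imp_eq[OF shift_less[unfolded N_def] assms(1)[unfolded N_def]])
  fix i assume i: "i \<in> {1..n}"
  show "digit s0 (shift q (shift q a z) z') i = digit s0 a i"
  proof (cases "i \<in> B q")
    case True
    have "digit s0 (shift q (shift q a z) z') i = ((digit s0 a i + z) mod s0 + z') mod s0"
      using i True by (simp only: digit_shift if_True)
    also have "\<dots> = (digit s0 a i + (z + z') mod s0) mod s0"
      by (metis mod_add_left_eq mod_add_right_eq add.assoc)
    also have "\<dots> = digit s0 a i" using assms(2) digit_less[OF s0_pos] by simp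
    finally show ?thesis .
  qed (use i in \<open>simp add: digit_shift\<close>)
qed

lemma exists_shift_onto:
  assumes p: "p < N" and q: "q < h'" and u: "u < s0"
  shows "\<exists>a<N. \<exists>z<s0. digit s0 a (rep q) = u \<and> shift q a z = p \<and> (z = 0 \<longrightarrow> a = p)"
proof -
  define dp where "dp = digit s0 p (rep q)"
  define z' where "z' = (u + (s0 - dp)) mod s0"
  define z where "z = (s0 - z') mod s0"
  define a where "a = shift q p z'"
  have dp: "dp < s0" and z': "z' < s0"
    using digit_less[OF s0_pos] s0_pos by (auto simp: dp_def z'_def)
  have rep: "rep q \<in> B q" "rep q \<in> {1..n}" using rep_mem_B[OF q] B_subset_nodes by blast+
  have "digit s0 a (rep q) = (dp + z') mod s0" using rep by (simp add: a_def dp_def digit_shift)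
  also have "\<dots> = (dp + (u + (s0 - dp))) mod s0" unfolding z'_def by (rule mod_add_right_eq)
  also have "dp + (u + (s0 - dp)) = u + s0" using dp by simp
  finally have "digit s0 a (rep q) = u" using u by simp
  moreover have "(z' + z) mod s0 = (z' + (s0 - z')) mod s0"
    unfolding z_def by (rule mod_add_right_eq)
  then have "(z' + z) mod s0 = 0" using z' by simp
  then have "shift q a z = p" unfolding a_def by (rule shift_shift[OF p])
  moreover have "z' \<noteq> 0 \<Longrightarrow> z \<noteq> 0" using z' by (simp add: z_def)
  then have "z = 0 \<longrightarrow> a = p" using shift_0[OF p] by (auto simp: a_def)
  moreover have "a < N" "z < s0" using shift_less s0_pos by (auto simp: a_def z_def)
  ultimately show ?thesis by blast
qed

definition msg_term :: "nat \<Rightarrow> nat \<Rightarrow> (nat \<Rightarrow> 'a) \<Rightarrow> nat \<Rightarrow> 'a" where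
  "msg_term q a col z =
    (if digit s0 a (rep q) = 0 then col ((m + q) * N + shift q a z)
     else col ((digit s0 a (rep q) - 1) * N + shift q a z)
       + (if z = 0 then col ((m + q) * N + a) else 0))"

definition repair_msg :: "nat \<Rightarrow> nat \<Rightarrow> (nat \<Rightarrow> 'a) \<Rightarrow> 'a" where
  "repair_msg q a col = (\<Sum>z<s0. msg_term q a col z)"

lemma msg_term_diff: "msg_term q a (\<lambda>\<tau>. f \<tau> - g \<tau>) z = msg_term q a f z - msg_term q a g z"
  unfolding msg_term_def by simp

lemma repair_msg_diff: "repair_msg q a (\<lambda>\<tau>. f \<tau> - g \<tau>) = repair_msg q a f - repair_msg q a g"
  unfolding repair_msg_def msg_term_diff by (rule sum_subtractf)

lemma parity_check_msg_term:
  assumes x: "x \<in> C" and q: "q < h'" and a: "a < N" and t: "t \<in> {1..n - k}"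
  shows "(\<Sum>i = 1..n. lam i (digit s0 (shift q a z) i) ^ (t - 1) * msg_term q a (x i) z) = 0"
proof -
  let ?u = "digit s0 a (rep q)"
  have top: "m + q < s" using q s_eq by simp
  have "?u - 1 < s" using digit_less[OF s0_pos, of a "rep q"] s0_eq s_eq q by simp
  note checks = parity_check[OF x shift_less[of q a z] top t]
    parity_check[OF x shift_less[of q a z] this t]
  show ?thesis
  proof (cases "?u = 0")
    case True
    then show ?thesis using checks(1) by (simp add: msg_term_def)
  next
    case False
    then show ?thesis using checks(2) parity_check[OF x a top t]
      by (cases "z = 0") (simp_all add: msg_term_def distrib_left sum.distrib shift_0[OF a])
  qed
qed

(* In the checks summed over the shifts along block q (shifted_check below), a node outside
   the block appears only through its message (q, a). Once the helpers' messages vanish, the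
   unknowns are the \<delta> * s0 block terms and one message per remaining node, at most n - k. *)
definition unknowns :: "nat \<Rightarrow> (nat \<times> nat) set" where
  "unknowns q = B q \<times> {..<s0} \<union> ({1..n} - B q - R) \<times> {0}"

lemma finite_unknowns: "finite (unknowns q)"
  unfolding unknowns_def using finite_B by simp

lemma card_unknowns: "card (unknowns q) \<le> n - k"
proof -
  have disjoint: "B q \<inter> R = {}" using B_subset R_subset by blast
  have card_B_le_h: "card (B q) \<le> h"
    using card_mono[OF finite_subset[OF H_subset finite_atLeastAtMost] B_subset] card_H by simp
  have "card ({1..n} - B q - R) = n - card (B q) - d"
  proof -
    have sub: "B q \<union> R \<subseteq> {1..n}" using B_subset_nodes R_subset by blast
    have "card (B q \<union> R) = card (B q) + d"
      using disjoint finite_B card_R R_subset by (simp add: card_Un_disjoint finite_subset)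
    moreover have "{1..n} - B q - R = {1..n} - (B q \<union> R)" by blast
    ultimately show ?thesis using card_Diff_subset[OF finite_subset[OF sub] sub] by simp
  qed
  have "card (unknowns q) \<le> card (B q \<times> {..<s0}) + card (({1..n} - B q - R) \<times> {0::nat})"
    unfolding unknowns_def by (rule card_Un_le)
  also have "\<dots> = card (B q) * s0 + (n - card (B q) - d)"
    using \<open>card ({1..n} - B q - R) = n - card (B q) - d\<close> by (simp add: card_cartesian_product)
  also have "\<dots> = card (B q) * m + (n - d)" using card_B_le_h d_plus_h s0_eq by simp
  also have "\<dots> \<le> \<delta> * m + (n - d)" using card_B_le by (simp add: mult_right_mono)
  also have "\<dots> = n - k" using d_minus_k k_less_d d_plus_h by simp
  finally show ?thesis .
qed

lemma inj_on_unknowns: "inj_on (\<lambda>(i, z). lam i (digit s0 (shift q a z) i)) (unknowns q)"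
proof (rule inj_onI, clarify)
  fix i z i' z' assume p: "(i, z) \<in> unknowns q" and p': "(i', z') \<in> unknowns q"
    and eq: "lam i (digit s0 (shift q a z) i) = lam i' (digit s0 (shift q a z') i')"
  have nodes: "i \<in> {1..n}" "i' \<in> {1..n}"
    using p p' B_subset_nodes[of q] unfolding unknowns_def by blast+
  have "(i, digit s0 (shift q a z) i) = (i', digit s0 (shift q a z') i')"
    by (rule inj_onD[OF lam_inj]) (use eq nodes digit_less[OF s0_pos] in auto)
  then have i: "i' = i" and digits: "digit s0 (shift q a z) i = digit s0 (shift q a z') i" by auto
  show "i = i' \<and> z = z'"
  proof (cases "i \<in> B q")
    case True
    then have "z < s0" "z' < s0" using p p' i by (auto simp: unknowns_def)
    then show ?thesis
      using digits True nodes i by (auto simp: digit_shift intro: mod_add_left_cancel_less)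
  next
    case False
    then show ?thesis using p p' i by (auto simp: unknowns_def)
  qed
qed

definition shifted_check :: "(nat \<Rightarrow> nat \<Rightarrow> 'a) \<Rightarrow> nat \<Rightarrow> nat \<Rightarrow> nat \<Rightarrow> nat \<Rightarrow> 'a" where
  "shifted_check x q a t i =
    (\<Sum>z<s0. lam i (digit s0 (shift q a z) i) ^ (t - 1) * msg_term q a (x i) z)"

lemma shifted_check_outside_block:
  "i \<in> {1..n} - B q \<Longrightarrow>
    shifted_check x q a t i = lam i (digit s0 a i) ^ (t - 1) * repair_msg q a (x i)"
  by (simp add: shifted_check_def repair_msg_def digit_shift sum_distrib_left)

lemma sum_shifted_checks:
  assumes "x \<in> C" "q < h'" "a < N" "t \<in> {1..n - k}"
  shows "(\<Sum>i = 1..n. shifted_check x q a t i) = 0"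
  unfolding shifted_check_def by (subst sum.swap) (intro sum.neutral ballI parity_check_msg_term[OF assms])

lemma silent_helpers_imp_block_zero:
  assumes x: "x \<in> C" and q: "q < h'" and a: "a < N"
    and silent: "\<And>j. j \<in> R \<Longrightarrow> repair_msg q a (x j) = 0"
  shows "(\<forall>i\<in>B q. \<forall>z<s0. msg_term q a (x i) z = 0)
    \<and> (\<forall>i\<in>{1..n} - B q - R. repair_msg q a (x i) = 0)"
proof -
  define \<mu> where "\<mu> = (\<lambda>(i, z). lam i (digit s0 (shift q a z) i))"
  define y where "y = (\<lambda>(i, z). if i \<in> B q then msg_term q a (x i) z else repair_msg q a (x i))"
  let ?S = "shifted_check x q a"
  have eqs: "(\<Sum>p\<in>unknowns q. \<mu> p ^ (t - 1) * y p) = 0" if t: "t \<in> {1..n - k}" for t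
  proof -
    have "(\<Sum>p\<in>unknowns q. \<mu> p ^ (t - 1) * y p)
        = (\<Sum>p\<in>B q \<times> {..<s0}. \<mu> p ^ (t - 1) * y p)
          + (\<Sum>p\<in>({1..n} - B q - R) \<times> {0}. \<mu> p ^ (t - 1) * y p)"
      unfolding unknowns_def using finite_B by (intro sum.union_disjoint) auto
    also have "(\<Sum>p\<in>B q \<times> {..<s0}. \<mu> p ^ (t - 1) * y p) = (\<Sum>i\<in>B q. ?S t i)"
      unfolding sum.cartesian_product'
      by (intro sum.cong) (auto simp: \<mu>_def y_def shifted_check_def)
    also have "(\<Sum>p\<in>({1..n} - B q - R) \<times> {0}. \<mu> p ^ (t - 1) * y p) = (\<Sum>i\<in>{1..n} - B q - R. ?S t i)"
      unfolding sum.cartesian_product'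
      by (intro sum.cong) (auto simp: \<mu>_def y_def shifted_check_outside_block shift_0[OF a])
    also have "(\<Sum>i\<in>B q. ?S t i) + (\<Sum>i\<in>{1..n} - B q - R. ?S t i)
        = (\<Sum>i\<in>B q \<union> ({1..n} - B q - R). ?S t i)"
      using finite_B by (intro sum.union_disjoint[symmetric]) auto
    also have "\<dots> = (\<Sum>i = 1..n. ?S t i)"
      using B_subset_nodes R_subset silent
      by (intro sum.mono_neutral_left) (auto simp: shifted_check_outside_block)
    also have "\<dots> = 0" by (rule sum_shifted_checks[OF x q a t])
    finally show ?thesis .
  qed
  have y_zero: "y p = 0" if "p \<in> unknowns q" for p
    by (rule vandermonde_homogeneous_zero[OF finite_unknowns
          inj_on_unknowns[of q a, folded \<mu>_def] card_unknowns eqs that])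
  show ?thesis
  proof (intro conjI ballI allI impI)
    fix i z assume "i \<in> B q" "z < s0"
    then show "msg_term q a (x i) z = 0" using y_zero[of "(i, z)"] by (simp add: unknowns_def y_def)
  next
    fix i assume "i \<in> {1..n} - B q - R"
    then show "repair_msg q a (x i) = 0" using y_zero[of "(i, 0)"] by (simp add: unknowns_def y_def)
  qed
qed

context
  fixes x :: "nat \<Rightarrow> nat \<Rightarrow> 'a"
  assumes x_C: "x \<in> C"
    and silent: "\<And>j q a. j \<in> R \<Longrightarrow> q < h' \<Longrightarrow> a < N \<Longrightarrow> repair_msg q a (x j) = 0"
begin

lemma msg_term_block_zero: "q < h' \<Longrightarrow> a < N \<Longrightarrow> i \<in> B q \<Longrightarrow> z < s0 \<Longrightarrow> msg_term q a (x i) z = 0"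
  using silent_helpers_imp_block_zero[OF x_C _ _ silent] by blast

lemma repair_msg_outside_zero:
  "q < h' \<Longrightarrow> a < N \<Longrightarrow> i \<in> {1..n} - B q - R \<Longrightarrow> repair_msg q a (x i) = 0"
  using silent_helpers_imp_block_zero[OF x_C _ _ silent] by blast

(* Layer m + blk i comes first: it makes the extra symbol in the other messages of the block
   known, which exposes the layers below m; the layers of the other blocks then follow from
   node i's own messages. *)
lemma own_block_layer_zero:
  assumes i: "i \<in> H" and p: "p < N"
  shows "x i ((m + blk i) * N + p) = 0"
proof -
  obtain a z where a: "a < N" "z < s0" "digit s0 a (rep (blk i)) = 0" "shift (blk i) a z = p"
    using exists_shift_onto[OF p blk_less[OF i], of 0] s0_pos by blast
  then show ?thesis
    using msg_term_block_zero[OF blk_less[OF i] a(1) mem_B_blk[OF i] a(2)]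
    by (simp add: msg_term_def)
qed

lemma lower_layer_zero:
  assumes i: "i \<in> H" and p: "p < N" and b: "b < m"
  shows "x i (b * N + p) = 0"
proof -
  obtain a z where a: "a < N" "z < s0" "digit s0 a (rep (blk i)) = b + 1" "shift (blk i) a z = p"
    "z = 0 \<longrightarrow> a = p"
    using exists_shift_onto[OF p blk_less[OF i], of "b + 1"] s0_eq b by auto
  have "x i (b * N + p) + (if z = 0 then x i ((m + blk i) * N + a) else 0) = 0"
    using msg_term_block_zero[OF blk_less[OF i] a(1) mem_B_blk[OF i] a(2)] a(3,4)
    by (simp add: msg_term_def)
  moreover have "z = 0 \<Longrightarrow> x i ((m + blk i) * N + a) = 0"
    using own_block_layer_zero[OF i p] a(5) by simp
  ultimately show ?thesis by (cases "z = 0") auto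
qed

lemma other_block_layer_zero:
  assumes i: "i \<in> H" and q: "q < h'" "q \<noteq> blk i" and p: "p < N"
  shows "x i ((m + q) * N + p) = 0"
proof -
  have outside: "i \<in> {1..n} - B q - R" using i q H_subset R_subset by (auto simp: B_def)
  have rep: "rep q \<in> B q" "rep q \<in> {1..n}" using rep_mem_B[OF q(1)] B_subset_nodes by blast+
  have nonzero_case: "x i ((m + q) * N + a) = 0" if a: "a < N" "digit s0 a (rep q) \<noteq> 0" for a
  proof -
    have "digit s0 a (rep q) - 1 < m" using a(2) digit_less[OF s0_pos, of a "rep q"] s0_eq by simp
    then have "(\<Sum>z<s0. x i ((digit s0 a (rep q) - 1) * N + shift q a z)) = 0"
      using lower_layer_zero[OF i shift_less] by simp
    then show ?thesis
      using repair_msg_outside_zero[OF q(1) a(1) outside] a(2) s0_pos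
      by (simp add: repair_msg_def msg_term_def sum.distrib)
  qed
  show ?thesis
  proof (cases "digit s0 p (rep q) = 0")
    case False
    then show ?thesis using nonzero_case[OF p] by simp
  next
    case True
    have shifted: "x i ((m + q) * N + shift q p z) = 0" if "z \<in> {..<s0} - {0}" for z
    proof -
      have "digit s0 (shift q p z) (rep q) = z" using rep True that by (simp add: digit_shift)
      then show ?thesis using nonzero_case[OF shift_less[of q p z]] that by simp
    qed
    have "repair_msg q p (x i) = (\<Sum>z<s0. x i ((m + q) * N + shift q p z))"
      using True by (simp add: repair_msg_def msg_term_def)
    also have "\<dots> = x i ((m + q) * N + shift q p 0)
        + (\<Sum>z\<in>{..<s0} - {0}. x i ((m + q) * N + shift q p z))"
      by (rule sum.remove) (use s0_pos in auto)
    also have "\<dots> = x i ((m + q) * N + p)"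
      using shifted shift_0[OF p] by simp
    finally show ?thesis using repair_msg_outside_zero[OF q(1) p outside] by simp
  qed
qed

lemma erased_nodes_zero:
  assumes i: "i \<in> H"
  shows "x i = (\<lambda>_. 0)"
proof
  fix \<tau>
  show "x i \<tau> = 0"
  proof (cases "\<tau> < ell")
    case False
    then show ?thesis using array_space_zero[OF C_array_space[OF x_C]] by simp
  next
    case True
    define b p where "b = \<tau> div N" and "p = \<tau> mod N"
    have bp: "b < s" "p < N" "\<tau> = b * N + p"
      using position_decomp[OF True] by (auto simp: b_def p_def)
    show ?thesis
    proof (cases "b < m")
      case True
      then show ?thesis using lower_layer_zero[OF i bp(2) True] bp(3) by simp
    next
      case False
      define q where "q = b - m"
      have q: "q < h'" "b = m + q" using False bp(1) s_eq by (auto simp: q_def)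
      then show ?thesis
        using own_block_layer_zero[OF i bp(2)] other_block_layer_zero[OF i q(1) _ bp(2)] bp(3)
        by (cases "q = blk i") auto
    qed
  qed
qed

end

lemma repair_from_helpers:
  "\<exists>g :: nat \<Rightarrow> (nat \<Rightarrow> 'a) \<Rightarrow> nat \<Rightarrow> 'a. \<forall>c\<in>C. \<forall>c'\<in>C.
     (\<forall>j\<in>R. \<forall>\<beta> < h' * N. g j (c j) \<beta> = g j (c' j) \<beta>) \<longrightarrow> (\<forall>i\<in>H. c i = c' i)"
proof (intro exI[of _ "\<lambda>j col \<beta>. repair_msg (\<beta> div N) (\<beta> mod N) col"] ballI impI)
  fix c c' i assume c: "c \<in> C" "c' \<in> C" and i: "i \<in> H"
  assume same: "\<forall>j\<in>R. \<forall>\<beta> < h' * N.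
    repair_msg (\<beta> div N) (\<beta> mod N) (c j) = repair_msg (\<beta> div N) (\<beta> mod N) (c' j)"
  have diff: "c - c' \<in> C" by (rule cw.subspace_diff[OF C_subspace c])
  have "repair_msg q a ((c - c') j) = 0" if "j \<in> R" "q < h'" "a < N" for j q a
  proof -
    have "repair_msg q a (c j) = repair_msg q a (c' j)"
      using same index_less_mult[OF that(2,3)] that by fastforce
    then show ?thesis using repair_msg_diff[of q a "c j" "c' j"] by (simp add: fun_diff_def)
  qed
  from erased_nodes_zero[OF diff this i] show "c i = c' i" by (simp add: fun_eq_iff)
qed

end

context C3_params
begin

lemma repair_bandwidth: "h * ell div (d - k + h) = h' * N"
proof -
  have eq: "h * ell = (d - k + h) * (h' * N)"
    unfolding ell_def by (simp add: h_eq d_minus_k s_eq algebra_simps)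
  show ?thesis
  proof (cases "d - k + h = 0")
    case True
    then have "h' = 0" using h_eq \<delta>_pos by simp
    then show ?thesis using True by simp
  next
    case False
    then show ?thesis unfolding eq by simp
  qed
qed

lemma optimal_repair: "has_optimal_repair n k ell h d C"
  unfolding has_optimal_repair_def repair_bandwidth
proof (intro allI impI)
  fix H R assume HR: "H \<subseteq> {1..n} \<and> card H = h \<and> R \<subseteq> {1..n} - H \<and> card R = d"
  then have "finite H" using finite_subset by blast
  then obtain idx where "bij_betw idx H {0..<card H}" using ex_bij_betw_finite_nat by blast
  then interpret C3_repair n k s0 s lam h d \<delta> m h' H R idx
    using HR by unfold_locales auto
  show "\<exists>g :: nat \<Rightarrow> (nat \<Rightarrow> 'a) \<Rightarrow> nat \<Rightarrow> 'a. \<forall>c\<in>C. \<forall>c'\<in>C.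
      (\<forall>j\<in>R. \<forall>\<beta> < h' * N. g j (c j) \<beta> = g j (c' j) \<beta>) \<longrightarrow> (\<forall>i\<in>H. c i = c' i)"
    by (rule repair_from_helpers)
qed

end

theorem theorem3:
  fixes n k h d :: nat and lam :: "nat \<Rightarrow> nat \<Rightarrow> 'a::{field,finite}"
  assumes "k \<ge> 1" and "n > k"
    and "2 \<le> h" and "h \<le> n - k"
    and "k < d" and "d \<le> n - h"
    and "card (UNIV :: 'a set) \<ge> ((d - k + gcd h (d - k)) div gcd h (d - k)) * n"
    and "inj_on (\<lambda>(i, j). lam i j) ({1..n} \<times> {0..<(d - k + gcd h (d - k)) div gcd h (d - k)})"
  shows "let \<delta> = gcd h (d - k); s0 = (d - k + \<delta>) div \<delta>; s = (d - k + h) div \<delta>;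
             ell = s * s0 ^ n; C = code_C3 n (n - k) s0 s lam
         in is_MDS_array_code n k ell C \<and> has_optimal_repair n k ell h d C"
proof -
  define \<delta> where "\<delta> = gcd h (d - k)"
  define m h' where "m = (d - k) div \<delta>" and "h' = h div \<delta>"
  have \<delta>_pos: "0 < \<delta>" using assms(3) by (simp add: \<delta>_def)
  have d_minus_k: "d - k = \<delta> * m" and h_eq: "h = \<delta> * h'" by (simp_all add: \<delta>_def m_def h'_def)
  have s0: "(d - k + \<delta>) div \<delta> = m + 1" and s: "(d - k + h) div \<delta> = m + h'"
    using \<delta>_pos unfolding d_minus_k h_eq by (simp_all flip: distrib_left)
  have inj: "inj_on (\<lambda>(i, j). lam i j) ({1..n} \<times> {0..<m + 1})"
    using assms(8) unfolding \<delta>_def[symmetric] s0 .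
  have "d + h \<le> n" using assms(4,6) by linarith
  interpret C3_params n k "m + 1" "m + h'" lam h d \<delta> m h'
    by unfold_locales (use assms(2,5) \<delta>_pos d_minus_k h_eq inj \<open>d + h \<le> n\<close> in auto)
  show ?thesis
    using C_MDS optimal_repair unfolding Let_def \<delta>_def[symmetric] s0 s ell_def N_def C_def by simp
qed

end
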